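(* Let $\Gamma_1,\Gamma_2$ be propositional theories over $\mathcal L$ and $A^+,A^-$ sets of atoms. Then $\Gamma_1$ and $\Gamma_2$ are relativized hyperequivalent w.r.t. $A^+$ and $A^-$ if and only if $E^{A^+}_{A^-}(\Gamma_1)=E^{A^+}_{A^-}(\Gamma_2)$.
   Context: Formulas are built from atoms and $\bot$ with $\wedge,\vee,\to$; $\neg\phi$ abbreviates $\phi\to\bot$. Let $\mathcal L^*=\mathcal L\cup A^+\cup A^-$; all HT-interpretations are over $\mathcal L^*$, i.e. pairs $(X,Y)$ with $X\subseteq Y\subseteq\mathcal L^*$, total if $X=Y$. HT-satisfaction: $(X,Y)\models a$ iff $a\in X$; $(X,Y)\not\models\bot$; $\wedge,\vee$ componentwise; $(X,Y)\models\phi\to\psi$ iff (i) $(X,Y)\not\models\phi$ or $(X,Y)\models\psi$, and (ii) $Y\models\phi\to\psi$ classically. $Y$ is an answer set of $\Gamma$ iff $(Y,Y)\models\Gamma$ and $(X,Y)\not\models\Gamma$ for all $X\subsetneq Y$. Polarity of occurrences is defined recursively: the occurrence of $\phi$ in itself is positive; occurrences of $\psi_1,\psi_2$ in a positive (resp. negative) occurrence of $\psi_1\wedge\psi_2$ or $\psi_1\vee\psi_2$ are positive (resp. negative); in an occurrence of $\psi_1\to\psi_2$, $\psi_1$ is negative and $\psi_2$ positive, and if that occurrence is negative then additionally $\psi_1$ is positive and $\psi_2$ negative (occurrences may be both). An $A^+$-$A^-$-theory is a theory over $A^+\cup A^-$ in whose formulas every positive occurrence of an atom is in $A^+$ and every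 negative occurrence of an atom is in $A^-$ ($\bot$ unrestricted). $\Gamma_1,\Gamma_2$ are relativized hyperequivalent w.r.t. $A^+,A^-$ iff for every $A^+$-$A^-$-theory $\Gamma$, $\Gamma_1\cup\Gamma$ and $\Gamma_2\cup\Gamma$ have the same answer sets. For a set $X$ and $A$, $X|_A=X\cap A$. $E_s(\Gamma)$ is the set of HT-interpretations that are total HT-models of $\Gamma$ or here-countermodels of $\Gamma$ ($(X,Y)\not\models\Gamma$ and $Y\models\Gamma$). $(X,Y)$ is closed in a set $S$ if $(X',Y)\in S$ for all $X\subseteq X'\subseteq Y$. $(Y,Y)$ is $A^+$-total (for $\Gamma$) iff $(Y|_{A^+},Y)$ is closed in $E_s(\Gamma)$. $(X,Y)$ is $A^+$-closed in $E_s(\Gamma)$ iff $(X',Y)\in E_s(\Gamma)$ for all $X'\subseteq Y$ with $X|_{A^+}\subseteq X'|_{A^+}$ and $X'|_{A^-}\subseteq X|_{A^-}$. $E^{A^+}_{A^-}(\Gamma)$ (HT-hyperequivalence interpretations) is the set of HT-interpretations $(X,Y)$ such that $(Y,Y)$ is $A^+$-total and there is $X'\subseteq Y$ with $X=X'|_{A^+\cup A^-}$ and $(X',Y)$ $A^+$-closed in $E_s(\Gamma)$. *)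

theory Defs
  imports Main
begin

datatype 'a frm = Atom 'a | Bot | And "'a frm" "'a frm" | Or "'a frm" "'a frm" | Imp "'a frm" "'a frm"

definition Neg :: "'a frm \<Rightarrow> 'a frm" where "Neg \<phi> = Imp \<phi> Bot"

fun atoms :: "'a frm \<Rightarrow> 'a set" where
  "atoms (Atom a) = {a}"
| "atoms Bot = {}"
| "atoms (And \<phi> \<psi>) = atoms \<phi> \<union> atoms \<psi>"
| "atoms (Or \<phi> \<psi>) = atoms \<phi> \<union> atoms \<psi>"
| "atoms (Imp \<phi> \<psi>) = atoms \<phi> \<union> atoms \<psi>"

fun csat :: "'a set \<Rightarrow> 'a frm \<Rightarrow> bool" where
  "csat Y (Atom a) = (a \<in> Y)"
| "csat Y Bot = False"
| "csat Y (And \<phi> \<psi>) = (csat Y \<phi> \<and> csat Y \<psi>)"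
| "csat Y (Or \<phi> \<psi>) = (csat Y \<phi> \<or> csat Y \<psi>)"
| "csat Y (Imp \<phi> \<psi>) = (csat Y \<phi> \<longrightarrow> csat Y \<psi>)"

fun htsat :: "'a set \<Rightarrow> 'a set \<Rightarrow> 'a frm \<Rightarrow> bool" where
  "htsat X Y (Atom a) = (a \<in> X)"
| "htsat X Y Bot = False"
| "htsat X Y (And \<phi> \<psi>) = (htsat X Y \<phi> \<and> htsat X Y \<psi>)"
| "htsat X Y (Or \<phi> \<psi>) = (htsat X Y \<phi> \<or> htsat X Y \<psi>)"
| "htsat X Y (Imp \<phi> \<psi>) = ((\<not> htsat X Y \<phi> \<or> htsat X Y \<psi>) \<and> csat Y (Imp \<phi> \<psi>))"

definition cmodels :: "'a set \<Rightarrow> 'a frm set \<Rightarrow> bool" where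
  "cmodels Y \<Gamma> = (\<forall>\<phi>\<in>\<Gamma>. csat Y \<phi>)"

definition htmodels :: "'a set \<Rightarrow> 'a set \<Rightarrow> 'a frm set \<Rightarrow> bool" where
  "htmodels X Y \<Gamma> = (\<forall>\<phi>\<in>\<Gamma>. htsat X Y \<phi>)"

text \<open>Answer sets; interpretations range over the atom universe U (= L*).\<close>
definition answer_set :: "'a set \<Rightarrow> 'a frm set \<Rightarrow> 'a set \<Rightarrow> bool" where
  "answer_set U \<Gamma> Y = (Y \<subseteq> U \<and> htmodels Y Y \<Gamma> \<and> (\<forall>X. X \<subset> Y \<longrightarrow> \<not> htmodels X Y \<Gamma>))"

text \<open>Polarity of atom occurrences: occ p n \<phi> collects pairs (a, True) for positive
  and (a, False) for negative occurrences of atoms inside an occurrence of \<phi> that is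
  positive iff p and negative iff n.\<close>
fun occ :: "bool \<Rightarrow> bool \<Rightarrow> 'a frm \<Rightarrow> ('a \<times> bool) set" where
  "occ p n (Atom a) = (if p then {(a, True)} else {}) \<union> (if n then {(a, False)} else {})"
| "occ p n Bot = {}"
| "occ p n (And \<phi> \<psi>) = occ p n \<phi> \<union> occ p n \<psi>"
| "occ p n (Or \<phi> \<psi>) = occ p n \<phi> \<union> occ p n \<psi>"
| "occ p n (Imp \<phi> \<psi>) = occ n True \<phi> \<union> occ True n \<psi>"

definition pos_atoms :: "'a frm \<Rightarrow> 'a set" where
  "pos_atoms \<phi> = {a. (a, True) \<in> occ True False \<phi>}"

definition neg_atoms :: "'a frm \<Rightarrow> 'a set" where
  "neg_atoms \<phi> = {a. (a, False) \<in> occ True False \<phi>}"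

definition pm_theory :: "'a set \<Rightarrow> 'a set \<Rightarrow> 'a frm set \<Rightarrow> bool" where
  "pm_theory Ap Am \<Gamma> = (\<forall>\<phi>\<in>\<Gamma>. atoms \<phi> \<subseteq> Ap \<union> Am \<and> pos_atoms \<phi> \<subseteq> Ap \<and> neg_atoms \<phi> \<subseteq> Am)"

definition rel_hyperequiv :: "'a set \<Rightarrow> 'a set \<Rightarrow> 'a set \<Rightarrow> 'a frm set \<Rightarrow> 'a frm set \<Rightarrow> bool" where
  "rel_hyperequiv L Ap Am \<Gamma>1 \<Gamma>2 =
     (\<forall>\<Gamma>. pm_theory Ap Am \<Gamma> \<longrightarrow>
        (\<forall>Y. answer_set (L \<union> Ap \<union> Am) (\<Gamma>1 \<union> \<Gamma>) Y = answer_set (L \<union> Ap \<union> Am) (\<Gamma>2 \<union> \<Gamma>) Y))"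

definition Es :: "'a set \<Rightarrow> 'a frm set \<Rightarrow> ('a set \<times> 'a set) set" where
  "Es U \<Gamma> = {(X, Y). X \<subseteq> Y \<and> Y \<subseteq> U \<and>
      ((X = Y \<and> htmodels Y Y \<Gamma>) \<or> (\<not> htmodels X Y \<Gamma> \<and> cmodels Y \<Gamma>))}"

definition closed_in :: "'a set \<Rightarrow> 'a set \<Rightarrow> ('a set \<times> 'a set) set \<Rightarrow> bool" where
  "closed_in X Y S = (\<forall>X'. X \<subseteq> X' \<and> X' \<subseteq> Y \<longrightarrow> (X', Y) \<in> S)"

definition Ap_total :: "'a set \<Rightarrow> 'a set \<Rightarrow> 'a frm set \<Rightarrow> 'a set \<Rightarrow> bool" where
  "Ap_total U Ap \<Gamma> Y = closed_in (Y \<inter> Ap) Y (Es U \<Gamma>)"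

definition Ap_closed :: "'a set \<Rightarrow> 'a set \<Rightarrow> 'a set \<Rightarrow> 'a frm set \<Rightarrow> 'a set \<Rightarrow> 'a set \<Rightarrow> bool" where
  "Ap_closed U Ap Am \<Gamma> X Y = (\<forall>X'. X' \<subseteq> Y \<and> X \<inter> Ap \<subseteq> X' \<inter> Ap \<and> X' \<inter> Am \<subseteq> X \<inter> Am
       \<longrightarrow> (X', Y) \<in> Es U \<Gamma>)"

definition E_hyp :: "'a set \<Rightarrow> 'a set \<Rightarrow> 'a set \<Rightarrow> 'a frm set \<Rightarrow> ('a set \<times> 'a set) set" where
  "E_hyp L Ap Am \<Gamma> = (let U = L \<union> Ap \<union> Am in
     {(X, Y). X \<subseteq> Y \<and> Y \<subseteq> U \<and> Ap_total U Ap \<Gamma> Y \<and>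
        (\<exists>X'. X' \<subseteq> Y \<and> X = X' \<inter> (Ap \<union> Am) \<and> Ap_closed U Ap Am \<Gamma> X' Y)})"

end

theory Submission
  imports Defs
begin

(* Write X \<preceq> Z when X|A+ \<subseteq> Z|A+ and Z|A- \<subseteq> X|A-.  HT-satisfaction of an
   A+-A- -theory \<Delta> is upward monotone along \<preceq> (for a fixed there-world Y), because atoms
   occur positively only from A+ and negatively only from A-.  From this we characterise the
   answer sets of \<Gamma> \<union> \<Delta>: Y is one iff Y \<Turnstile> \<Delta>, (Y,Y) is A+-total for \<Gamma>, and every
   HT-model (X,Y) of \<Delta> is A+-closed in E_s(\<Gamma>).  Since A+-closedness only depends on X|A+\<union>A-,
   both conditions on \<Gamma> can be read off E^{A+}_{A-}(\<Gamma>), so equal sets E^{A+}_{A-} give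
   relativized hyperequivalence.  Conversely, for (X'|A+\<union>A-, Y) \<in> E^{A+}_{A-}(\<Gamma>1) we build an
   A+-A- -theory whose HT-models with there-world Y lie \<preceq>-above X' or above Y; then Y is an
   answer set of \<Gamma>1 plus this theory, hence of \<Gamma>2 plus it, which puts the interpretation into
   E^{A+}_{A-}(\<Gamma>2). *)

text \<open>The preorder along which HT-models of A+-A- -theories are preserved.\<close>
definition pm_le :: "'a set \<Rightarrow> 'a set \<Rightarrow> 'a set \<Rightarrow> 'a set \<Rightarrow> bool" where
  "pm_le Ap Am X Z = (X \<inter> Ap \<subseteq> Z \<inter> Ap \<and> Z \<inter> Am \<subseteq> X \<inter> Am)"

lemma pm_le_trans: "pm_le Ap Am X Z \<Longrightarrow> pm_le Ap Am Z W \<Longrightarrow> pm_le Ap Am X W"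
  unfolding pm_le_def by blast

lemma htsat_total: "htsat Y Y \<phi> = csat Y \<phi>"
  by (induction \<phi>) auto

lemma htmodels_total: "htmodels Y Y \<Gamma> = cmodels Y \<Gamma>"
  by (simp add: htmodels_def cmodels_def htsat_total)

text \<open>Both directions are needed simultaneously for the induction through implications.\<close>
lemma htsat_polarity_mono:
  assumes "\<forall>a. (a, True) \<in> occ p n \<phi> \<longrightarrow> a \<in> Ap"
    and "\<forall>a. (a, False) \<in> occ p n \<phi> \<longrightarrow> a \<in> Am"
    and "pm_le Ap Am X Z"
  shows "(p \<longrightarrow> htsat X Y \<phi> \<longrightarrow> htsat Z Y \<phi>) \<and> (n \<longrightarrow> htsat Z Y \<phi> \<longrightarrow> htsat X Y \<phi>)"
  using assms
proof (induction \<phi> arbitrary: p n)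
  case (Atom a)
  then show ?case by (auto simp: pm_le_def)
next
  case Bot
  then show ?case by simp
next
  case (And \<phi>1 \<phi>2)
  then show ?case using And.IH(1)[of p n] And.IH(2)[of p n] by auto
next
  case (Or \<phi>1 \<phi>2)
  then show ?case using Or.IH(1)[of p n] Or.IH(2)[of p n] by auto
next
  case (Imp \<phi>1 \<phi>2)
  \<comment> \<open>the antecedent is negative (and positive if the implication is negative)\<close>
  have "(n \<longrightarrow> htsat X Y \<phi>1 \<longrightarrow> htsat Z Y \<phi>1) \<and> (htsat Z Y \<phi>1 \<longrightarrow> htsat X Y \<phi>1)"
    using Imp.IH(1)[of n True] Imp.prems by auto
  moreover have "(htsat X Y \<phi>2 \<longrightarrow> htsat Z Y \<phi>2) \<and> (n \<longrightarrow> htsat Z Y \<phi>2 \<longrightarrow> htsat X Y \<phi>2)"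
    using Imp.IH(2)[of True n] Imp.prems by auto
  ultimately show ?case by auto
qed

lemma htmodels_pm_mono:
  assumes "pm_theory Ap Am \<Delta>" and "pm_le Ap Am X Z" and "htmodels X Y \<Delta>"
  shows "htmodels Z Y \<Delta>"
  unfolding htmodels_def
proof
  fix \<phi> assume \<phi>: "\<phi> \<in> \<Delta>"
  have "htsat X Y \<phi> \<longrightarrow> htsat Z Y \<phi>"
    using htsat_polarity_mono[of True False \<phi> Ap Am X Z Y] assms(1,2) \<phi>
    by (auto simp: pm_theory_def pos_atoms_def neg_atoms_def)
  then show "htsat Z Y \<phi>" using assms(3) \<phi> by (auto simp: htmodels_def)
qed

lemma Ap_closed_pm_le:
  "Ap_closed U Ap Am \<Gamma> X Y = (\<forall>X'. X' \<subseteq> Y \<and> pm_le Ap Am X X' \<longrightarrow> (X', Y) \<in> Es U \<Gamma>)"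
  unfolding Ap_closed_def pm_le_def by blast

lemma Ap_closed_upward:
  "Ap_closed U Ap Am \<Gamma> X Y \<Longrightarrow> pm_le Ap Am X Z \<Longrightarrow> Ap_closed U Ap Am \<Gamma> Z Y"
  unfolding Ap_closed_pm_le using pm_le_trans by blast

lemma Ap_total_iff_closed: "Ap_total U Ap \<Gamma> Y = Ap_closed U Ap Am \<Gamma> Y Y"
  unfolding Ap_total_def Ap_closed_def closed_in_def by blast

lemma Ap_closed_restrict:
  "X \<inter> (Ap \<union> Am) = X' \<inter> (Ap \<union> Am) \<Longrightarrow> Ap_closed U Ap Am \<Gamma> X Y = Ap_closed U Ap Am \<Gamma> X' Y"
  unfolding Ap_closed_def by blast

lemma answer_set_pm_union_iff:
  assumes pm: "pm_theory Ap Am \<Delta>"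
  shows "answer_set U (\<Gamma> \<union> \<Delta>) Y \<longleftrightarrow> Y \<subseteq> U \<and> cmodels Y \<Delta> \<and> Ap_total U Ap \<Gamma> Y \<and>
     (\<forall>X. X \<subseteq> Y \<and> htmodels X Y \<Delta> \<longrightarrow> Ap_closed U Ap Am \<Gamma> X Y)"
proof
  assume "answer_set U (\<Gamma> \<union> \<Delta>) Y"
  hence YU: "Y \<subseteq> U" and tot: "htmodels Y Y (\<Gamma> \<union> \<Delta>)"
    and min: "\<forall>X. X \<subset> Y \<longrightarrow> \<not> htmodels X Y (\<Gamma> \<union> \<Delta>)" by (auto simp: answer_set_def)
  have cG: "cmodels Y \<Gamma>" and cD: "cmodels Y \<Delta>"
    using tot by (auto simp: htmodels_total[symmetric] htmodels_def)
  have closed: "Ap_closed U Ap Am \<Gamma> X Y" if "X \<subseteq> Y" "htmodels X Y \<Delta>" for X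
    unfolding Ap_closed_pm_le
  proof (intro allI impI)
    fix X' assume X': "X' \<subseteq> Y \<and> pm_le Ap Am X X'"
    hence "htmodels X' Y \<Delta>" using htmodels_pm_mono[OF pm] that by blast
    \<comment> \<open>a proper X' cannot HT-satisfy \<Gamma> by minimality, so it is a here-countermodel\<close>
    moreover have "X' \<noteq> Y \<Longrightarrow> \<not> htmodels X' Y (\<Gamma> \<union> \<Delta>)" using min X' by blast
    ultimately show "(X', Y) \<in> Es U \<Gamma>"
      using X' YU cG by (cases "X' = Y") (auto simp: Es_def htmodels_total htmodels_def)
  qed
  have "Ap_total U Ap \<Gamma> Y"
    unfolding Ap_total_iff_closed[where Am=Am] using closed[of Y] cD by (simp add: htmodels_total)
  with YU cD closed show "Y \<subseteq> U \<and> cmodels Y \<Delta> \<and> Ap_total U Ap \<Gamma> Y \<and>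
     (\<forall>X. X \<subseteq> Y \<and> htmodels X Y \<Delta> \<longrightarrow> Ap_closed U Ap Am \<Gamma> X Y)" by blast
next
  assume h: "Y \<subseteq> U \<and> cmodels Y \<Delta> \<and> Ap_total U Ap \<Gamma> Y \<and>
     (\<forall>X. X \<subseteq> Y \<and> htmodels X Y \<Delta> \<longrightarrow> Ap_closed U Ap Am \<Gamma> X Y)"
  hence "(Y, Y) \<in> Es U \<Gamma>" unfolding Ap_total_def closed_in_def by blast
  hence cG: "cmodels Y \<Gamma>" by (auto simp: Es_def htmodels_total)
  have "\<not> htmodels X Y (\<Gamma> \<union> \<Delta>)" if "X \<subset> Y" for X
  proof
    assume hm: "htmodels X Y (\<Gamma> \<union> \<Delta>)"
    hence "Ap_closed U Ap Am \<Gamma> X Y" using h that by (auto simp: htmodels_def)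
    hence "(X, Y) \<in> Es U \<Gamma>" unfolding Ap_closed_pm_le pm_le_def using that by blast
    then show False using hm that by (auto simp: Es_def htmodels_def)
  qed
  then show "answer_set U (\<Gamma> \<union> \<Delta>) Y" using h cG
    by (auto simp: answer_set_def htmodels_total cmodels_def)
qed

lemma Ap_total_iff_E_hyp:
  "Y \<subseteq> L \<union> Ap \<union> Am \<Longrightarrow>
   Ap_total (L \<union> Ap \<union> Am) Ap \<Gamma> Y \<longleftrightarrow> (Y \<inter> (Ap \<union> Am), Y) \<in> E_hyp L Ap Am \<Gamma>"
  unfolding E_hyp_def Let_def using Ap_total_iff_closed[where Am=Am] by auto

lemma Ap_closed_iff_E_hyp:
  assumes "Y \<subseteq> L \<union> Ap \<union> Am" "Ap_total (L \<union> Ap \<union> Am) Ap \<Gamma> Y" "X \<subseteq> Y"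
  shows "Ap_closed (L \<union> Ap \<union> Am) Ap Am \<Gamma> X Y \<longleftrightarrow> (X \<inter> (Ap \<union> Am), Y) \<in> E_hyp L Ap Am \<Gamma>"
proof
  assume "Ap_closed (L \<union> Ap \<union> Am) Ap Am \<Gamma> X Y"
  then show "(X \<inter> (Ap \<union> Am), Y) \<in> E_hyp L Ap Am \<Gamma>"
    using assms unfolding E_hyp_def Let_def by auto
next
  assume "(X \<inter> (Ap \<union> Am), Y) \<in> E_hyp L Ap Am \<Gamma>"
  then obtain X' where "X \<inter> (Ap \<union> Am) = X' \<inter> (Ap \<union> Am)" "Ap_closed (L \<union> Ap \<union> Am) Ap Am \<Gamma> X' Y"
    unfolding E_hyp_def Let_def by auto
  then show "Ap_closed (L \<union> Ap \<union> Am) Ap Am \<Gamma> X Y" using Ap_closed_restrict by metis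
qed

lemma answer_set_pm_union_E_hyp:
  assumes "pm_theory Ap Am \<Delta>"
  shows "answer_set (L \<union> Ap \<union> Am) (\<Gamma> \<union> \<Delta>) Y \<longleftrightarrow>
     Y \<subseteq> L \<union> Ap \<union> Am \<and> cmodels Y \<Delta> \<and> (Y \<inter> (Ap \<union> Am), Y) \<in> E_hyp L Ap Am \<Gamma> \<and>
     (\<forall>X. X \<subseteq> Y \<and> htmodels X Y \<Delta> \<longrightarrow> (X \<inter> (Ap \<union> Am), Y) \<in> E_hyp L Ap Am \<Gamma>)"
proof (cases "Y \<subseteq> L \<union> Ap \<union> Am \<and> Ap_total (L \<union> Ap \<union> Am) Ap \<Gamma> Y")
  case True
  then have "(\<forall>X. X \<subseteq> Y \<and> htmodels X Y \<Delta> \<longrightarrow> Ap_closed (L \<union> Ap \<union> Am) Ap Am \<Gamma> X Y) \<longleftrightarrow>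
      (\<forall>X. X \<subseteq> Y \<and> htmodels X Y \<Delta> \<longrightarrow> (X \<inter> (Ap \<union> Am), Y) \<in> E_hyp L Ap Am \<Gamma>)"
    by (simp add: Ap_closed_iff_E_hyp)
  moreover have "(Y \<inter> (Ap \<union> Am), Y) \<in> E_hyp L Ap Am \<Gamma>"
    using True Ap_total_iff_E_hyp by blast
  ultimately show ?thesis using True unfolding answer_set_pm_union_iff[OF assms] by simp
next
  case False
  then show ?thesis
    unfolding answer_set_pm_union_iff[OF assms] using Ap_total_iff_E_hyp[of Y L Ap Am \<Gamma>] by auto
qed

definition witness_theory :: "'a set \<Rightarrow> 'a set \<Rightarrow> 'a set \<Rightarrow> 'a set \<Rightarrow> 'a frm set" where
  "witness_theory Ap Am X Y = Atom ` (X \<inter> Ap) \<union>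
     {Imp (Atom b) (Atom a) | b a. b \<in> (Y \<inter> Am) - X \<and> a \<in> (Y - X) \<inter> Ap}"

lemma witness_theory_pm: "pm_theory Ap Am (witness_theory Ap Am X Y)"
  unfolding pm_theory_def witness_theory_def pos_atoms_def neg_atoms_def by auto

lemma witness_theory_models:
  "X \<subseteq> Y \<Longrightarrow> cmodels Y (witness_theory Ap Am X Y)"
  "htmodels X Y (witness_theory Ap Am X Y)"
  unfolding cmodels_def htmodels_def witness_theory_def by auto

text \<open>Every HT-model (Z,Y) of the witness theory lies \<preceq>-above X or above Y: either Z adds no
  A- -atom outside X, or it contains some b \<in> A- - X and then all of Y|A+ by the rules.\<close>
lemma witness_theory_htmodels:
  assumes "Z \<subseteq> Y" and "htmodels Z Y (witness_theory Ap Am X Y)"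
  shows "pm_le Ap Am X Z \<or> pm_le Ap Am Y Z"
proof -
  have facts: "X \<inter> Ap \<subseteq> Z"
    using assms(2) unfolding htmodels_def witness_theory_def by force
  have rules: "a \<in> Z" if "b \<in> Z" "b \<in> (Y \<inter> Am) - X" "a \<in> (Y - X) \<inter> Ap" for a b
  proof -
    have "Imp (Atom b) (Atom a) \<in> witness_theory Ap Am X Y"
      using that(2,3) unfolding witness_theory_def by blast
    then show ?thesis using assms(2) that(1) unfolding htmodels_def by auto
  qed
  show ?thesis
  proof (cases "Z \<inter> Am \<subseteq> X")
    case True
    then show ?thesis using facts unfolding pm_le_def by blast
  next
    case False
    then obtain b where "b \<in> Z" "b \<in> Am" "b \<notin> X" by blast
    hence "Y \<inter> Ap \<subseteq> Z" using facts rules assms(1) by blast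
    then show ?thesis using assms(1) unfolding pm_le_def by blast
  qed
qed

text \<open>Main step of the "only if" direction: relativized hyperequivalence transfers membership
  in E^{A+}_{A-} from \<Gamma>1 to \<Gamma>2, via the answer set Y of \<Gamma>1 plus a witness theory.\<close>
lemma rel_hyperequiv_E_hyp_subset:
  assumes "rel_hyperequiv L Ap Am \<Gamma>1 \<Gamma>2"
  shows "E_hyp L Ap Am \<Gamma>1 \<subseteq> E_hyp L Ap Am \<Gamma>2"
proof
  fix I assume "I \<in> E_hyp L Ap Am \<Gamma>1"
  then obtain X Y where I: "I = (X \<inter> (Ap \<union> Am), Y)" and XY: "X \<subseteq> Y"
    and YU: "Y \<subseteq> L \<union> Ap \<union> Am" and tot: "Ap_total (L \<union> Ap \<union> Am) Ap \<Gamma>1 Y"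
    and cl: "Ap_closed (L \<union> Ap \<union> Am) Ap Am \<Gamma>1 X Y"
    unfolding E_hyp_def Let_def by auto
  define \<Delta> where "\<Delta> = witness_theory Ap Am X Y"
  have pm: "pm_theory Ap Am \<Delta>" unfolding \<Delta>_def by (rule witness_theory_pm)
  have cl_Y: "Ap_closed (L \<union> Ap \<union> Am) Ap Am \<Gamma>1 Y Y"
    using tot by (simp add: Ap_total_iff_closed[where Am=Am])
  have "Ap_closed (L \<union> Ap \<union> Am) Ap Am \<Gamma>1 Z Y" if "Z \<subseteq> Y" "htmodels Z Y \<Delta>" for Z
  proof -
    have "pm_le Ap Am X Z \<or> pm_le Ap Am Y Z"
      using witness_theory_htmodels that unfolding \<Delta>_def by blast
    then show ?thesis using Ap_closed_upward[OF cl] Ap_closed_upward[OF cl_Y] by blast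
  qed
  moreover have "cmodels Y \<Delta>" unfolding \<Delta>_def using XY by (rule witness_theory_models(1))
  ultimately have "answer_set (L \<union> Ap \<union> Am) (\<Gamma>1 \<union> \<Delta>) Y"
    unfolding answer_set_pm_union_iff[OF pm] using YU tot by blast
  hence "answer_set (L \<union> Ap \<union> Am) (\<Gamma>2 \<union> \<Delta>) Y"
    using assms pm unfolding rel_hyperequiv_def by blast
  moreover have "htmodels X Y \<Delta>" unfolding \<Delta>_def by (rule witness_theory_models(2))
  ultimately show "I \<in> E_hyp L Ap Am \<Gamma>2"
    unfolding I answer_set_pm_union_E_hyp[OF pm] using XY by blast
qed

theorem mainTheorem11:
  fixes L Ap Am :: "'a set" and \<Gamma>1 \<Gamma>2 :: "'a frm set"
  assumes "\<forall>\<phi>\<in>\<Gamma>1. atoms \<phi> \<subseteq> L"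
      and "\<forall>\<phi>\<in>\<Gamma>2. atoms \<phi> \<subseteq> L"
  shows "rel_hyperequiv L Ap Am \<Gamma>1 \<Gamma>2 \<longleftrightarrow> E_hyp L Ap Am \<Gamma>1 = E_hyp L Ap Am \<Gamma>2"
proof
  assume "rel_hyperequiv L Ap Am \<Gamma>1 \<Gamma>2"
  moreover from this have "rel_hyperequiv L Ap Am \<Gamma>2 \<Gamma>1"
    unfolding rel_hyperequiv_def by metis
  ultimately show "E_hyp L Ap Am \<Gamma>1 = E_hyp L Ap Am \<Gamma>2"
    using rel_hyperequiv_E_hyp_subset by (metis subset_antisym)
next
  assume "E_hyp L Ap Am \<Gamma>1 = E_hyp L Ap Am \<Gamma>2"
  then show "rel_hyperequiv L Ap Am \<Gamma>1 \<Gamma>2"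
    unfolding rel_hyperequiv_def by (simp add: answer_set_pm_union_E_hyp)
qed

end
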